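(* Let $Y$ be a totally ordered set. The Lyndon monomials $P_w$, for $w$ ranging over Lyndon words in $Y$ without repetition (no letter occurring twice), form a $\mathbb Z$-basis of $R\mathfrak L[Y]$. Consequently, for $|Y|=n$, the degree-$k$ part $R\mathfrak L[n]_k$ is free abelian of rank $(k-1)!\binom{n}{k}$.
   Context: $R\mathfrak L[Y]$ is the Lie ring generated by $Y$ subject to $[y_1,[y_2,[\cdots[y_{s-1},y_s]\cdots]]]=0$ for every $s\geq2$ and every $(y_1,\dots,y_s)\in Y^s$ with $y_i=y_j$ for some $i\neq j$; it is graded by bracket length. Words in $Y$ are ordered lexicographically (dictionary order). A Lyndon word is a nonempty word strictly smaller than each of its proper nonempty suffixes. The standard factorization of a word $w$ of length $\geq2$ is $w=uv$ where $v$ is its smallest proper suffix. Lyndon monomials are defined inductively: $P_y=y$ for a letter $y$, and $P_w=[P_u,P_v]$ if $w=uv$ is the standard factorization of the Lyndon word $w$ (here $P_w$ is viewed in $R\mathfrak L[Y]$). *)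

theory Defs
  imports Main
begin

text \<open>Binary bracket trees over the alphabet: the free magma M(Y).\<close>
datatype 'a btree = Leaf 'a | Br "'a btree" "'a btree"

fun nleaves :: "'a btree \<Rightarrow> nat" where
  "nleaves (Leaf _) = 1"
| "nleaves (Br s t) = nleaves s + nleaves t"

text \<open>Elements of the free nonassociative ring: finitely supported integer
  valued functions on trees (formal Z-linear combinations of trees).\<close>
definition fin_supp :: "('a btree \<Rightarrow> int) \<Rightarrow> bool" where
  "fin_supp p \<longleftrightarrow> finite {t. p t \<noteq> 0}"

definition mmul :: "('a btree \<Rightarrow> int) \<Rightarrow> ('a btree \<Rightarrow> int) \<Rightarrow> ('a btree \<Rightarrow> int)" where
  "mmul p q t = (case t of Leaf _ \<Rightarrow> 0 | Br u v \<Rightarrow> p u * q v)"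

definition gen :: "'a \<Rightarrow> ('a btree \<Rightarrow> int)" where
  "gen y = (\<lambda>t. if t = Leaf y then 1 else 0)"

fun rnorm :: "'a list \<Rightarrow> ('a btree \<Rightarrow> int)" where
  "rnorm [] = (\<lambda>_. 0)"
| "rnorm [y] = gen y"
| "rnorm (y # ys) = mmul (gen y) (rnorm ys)"

text \<open>The two-sided ideal I of the free nonassociative ring generated by the Lie ring
  relations ([a,a] and Jacobi) together with the defining relations of RL[Y]
  (right-normed brackets of length s >= 2 with a repeated letter).\<close>
inductive_set rl_ideal :: "('a btree \<Rightarrow> int) set" where
  alt: "fin_supp a \<Longrightarrow> mmul a a \<in> rl_ideal"
| jacobi: "fin_supp a \<Longrightarrow> fin_supp b \<Longrightarrow> fin_supp c \<Longrightarrow>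
     (\<lambda>t. mmul a (mmul b c) t + mmul b (mmul c a) t + mmul c (mmul a b) t) \<in> rl_ideal"
| rep: "2 \<le> length ys \<Longrightarrow> \<not> distinct ys \<Longrightarrow> rnorm ys \<in> rl_ideal"
| zero: "(\<lambda>_. 0) \<in> rl_ideal"
| add: "p \<in> rl_ideal \<Longrightarrow> q \<in> rl_ideal \<Longrightarrow> (\<lambda>t. p t + q t) \<in> rl_ideal"
| neg: "p \<in> rl_ideal \<Longrightarrow> (\<lambda>t. - p t) \<in> rl_ideal"
| mult_left: "fin_supp a \<Longrightarrow> p \<in> rl_ideal \<Longrightarrow> mmul a p \<in> rl_ideal"
| mult_right: "fin_supp a \<Longrightarrow> p \<in> rl_ideal \<Longrightarrow> mmul p a \<in> rl_ideal"

text \<open>Congruence modulo I, i.e. equality in RL[Y].\<close>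
definition rl_eq :: "('a btree \<Rightarrow> int) \<Rightarrow> ('a btree \<Rightarrow> int) \<Rightarrow> bool" where
  "rl_eq p q \<longleftrightarrow> (\<lambda>t. p t - q t) \<in> rl_ideal"

definition homog :: "nat \<Rightarrow> ('a btree \<Rightarrow> int) \<Rightarrow> bool" where
  "homog k p \<longleftrightarrow> fin_supp p \<and> (\<forall>t. p t \<noteq> 0 \<longrightarrow> nleaves t = k)"

text \<open>Lexicographic (dictionary) order on words: a proper prefix is smaller.\<close>
definition word_less :: "'a::linorder list \<Rightarrow> 'a list \<Rightarrow> bool" where
  "word_less u v \<longleftrightarrow> (u, v) \<in> lexord {(a, b). a < b}"

definition lyndon :: "'a::linorder list \<Rightarrow> bool" where
  "lyndon w \<longleftrightarrow> w \<noteq> [] \<and> (\<forall>i. 0 < i \<and> i < length w \<longrightarrow> word_less w (drop i w))"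

text \<open>Position of the standard factorization w = uv: v = drop i w is the smallest
  proper nonempty suffix.\<close>
definition std_idx :: "'a::linorder list \<Rightarrow> nat" where
  "std_idx w = (THE i. 0 < i \<and> i < length w \<and>
      (\<forall>j. 0 < j \<and> j < length w \<and> j \<noteq> i \<longrightarrow> word_less (drop i w) (drop j w)))"

function lyn_mon :: "'a::linorder list \<Rightarrow> ('a btree \<Rightarrow> int)" where
  "lyn_mon w =
    (if length w \<le> 1 then gen (hd w)
     else if 0 < std_idx w \<and> std_idx w < length w
       then mmul (lyn_mon (take (std_idx w) w)) (lyn_mon (drop (std_idx w) w))
       else (\<lambda>_. 0))"
  by pat_completeness auto
termination
  by (relation "measure length") auto

definition lyn_comb :: "('a::linorder list \<Rightarrow> int) \<Rightarrow> ('a btree \<Rightarrow> int)" where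
  "lyn_comb c = (\<lambda>t. \<Sum>w\<in>{w. c w \<noteq> 0}. c w * lyn_mon w t)"

end

(*
  The ring map from the free nonassociative ring on Y to the free associative ring Z<Y> sending
  [p, q] to pq - qp kills the Lie relations, and it sends a right-normed bracket with a repeated
  letter to a polynomial supported on words with that repetition. So the image of the ideal
  vanishes on repetition-free words, and there the image of the Lyndon monomial P_w is w plus
  lexicographically larger words of the same length: the P_w are independent.

  Conversely every bracket monomial is a combination of left-normed brackets [[y1, y2], ..., yk];
  these vanish when a letter repeats, and otherwise Jacobi and anticommutativity rewrite them as
  brackets starting with the smallest letter, i.e. indexed by repetition-free Lyndon words. The
  images of those brackets are orthonormal on such words, so the transition matrix to the Lyndon
  monomials is unitriangular and can be inverted. A repetition-free Lyndon word is its smallest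
  letter followed by an arbitrary arrangement of the others, whence the rank (k - 1)! (n choose k).
*)

theory Submission
  imports Defs "HOL-Library.List_Lexorder" "HOL-Combinatorics.Multiset_Permutations"
begin

section \<open>Lyndon words and the standard factorization\<close>

lemma word_less_iff_less: "word_less u v \<longleftrightarrow> u < v"
  by (simp add: word_less_def list_less_def)

lemma less_append_same_left: "u @ v < u @ w \<longleftrightarrow> v < (w :: 'a::linorder list)"
  by (simp add: list_less_def irrefl_def)

lemma less_append_same_length: "u < a \<Longrightarrow> length a \<le> length u \<Longrightarrow> u @ v < a @ (b :: 'a::linorder list)"
  unfolding list_less_def by (rule lexord_sufI)

lemma less_append_right: "u < a \<Longrightarrow> u < a @ (b :: 'a::linorder list)"
proof (induction u arbitrary: a)
  case Nil
  then show ?case by (cases a) auto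
next
  case (Cons x u)
  then show ?case by (cases a) auto
qed

lemma lyndon_iff_less:
  "lyndon w \<longleftrightarrow> w \<noteq> [] \<and> (\<forall>i. 0 < i \<and> i < length w \<longrightarrow> w < drop i w)"
  by (simp add: lyndon_def word_less_iff_less)

lemma lyndon_hd_le:
  assumes "lyndon w" "x \<in> set w"
  shows "hd w \<le> x"
proof -
  obtain i where i: "i < length w" "w ! i = x"
    using assms(2) by (metis in_set_conv_nth)
  obtain a as where w: "w = a # as"
    using assms(1) by (cases w) (auto simp: lyndon_def)
  show ?thesis
  proof (cases "i = 0")
    case True
    then show ?thesis using i w by simp
  next
    case False
    then have "w < drop i w" using assms(1) i by (simp add: lyndon_iff_less)
    moreover have "drop i w = x # drop (Suc i) w" using i by (metis Cons_nth_drop_Suc)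
    ultimately show ?thesis using w by auto
  qed
qed

lemma distinct_lyndon_iff:
  assumes "distinct w"
  shows "lyndon w \<longleftrightarrow> w \<noteq> [] \<and> (\<forall>x\<in>set w. hd w \<le> x)"
proof
  assume "lyndon w"
  then show "w \<noteq> [] \<and> (\<forall>x\<in>set w. hd w \<le> x)"
    using lyndon_hd_le by (auto simp: lyndon_def)
next
  assume min: "w \<noteq> [] \<and> (\<forall>x\<in>set w. hd w \<le> x)"
  then obtain a as where w: "w = a # as" by (cases w) auto
  have "w < drop i w" if i: "0 < i" "i < length w" for i
  proof -
    have "drop i w = w ! i # drop (Suc i) w" using i by (metis Cons_nth_drop_Suc)
    moreover have "w ! i \<noteq> a"
      using nth_eq_iff_index_eq[OF assms, of i 0] i w by auto
    moreover have "a \<le> w ! i" using min w i by simp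
    ultimately show ?thesis using w by auto
  qed
  then show "lyndon w" using min by (simp add: lyndon_iff_less)
qed

lemma std_idx_minimal:
  assumes "2 \<le> length w"
  shows "0 < std_idx w" "std_idx w < length w"
    "\<And>j. 0 < j \<Longrightarrow> j < length w \<Longrightarrow> j \<noteq> std_idx w \<Longrightarrow> drop (std_idx w) w < drop j w"
proof -
  let ?P = "\<lambda>i. 0 < i \<and> i < length w \<and>
      (\<forall>j. 0 < j \<and> j < length w \<and> j \<noteq> i \<longrightarrow> word_less (drop i w) (drop j w))"
  let ?S = "(\<lambda>j. drop j w) ` {0<..<length w}"
  have "1 \<in> {0<..<length w}" using assms by simp
  then have "Min ?S \<in> ?S" by (intro Min_in) auto
  then obtain i where i: "0 < i" "i < length w" "drop i w = Min ?S" by auto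
  have "drop i w < drop j w" if "0 < j" "j < length w" "j \<noteq> i" for j
  proof -
    have "drop i w \<le> drop j w" using i that by simp
    moreover have "drop i w \<noteq> drop j w"
    proof
      assume "drop i w = drop j w"
      then have "length (drop i w) = length (drop j w)" by simp
      then show False using i(1,2) that by simp
    qed
    ultimately show ?thesis by simp
  qed
  then have Pi: "?P i" using i by (simp add: word_less_iff_less)
  moreover have "k = i" if "?P k" for k
  proof (rule ccontr)
    assume "k \<noteq> i"
    then have "drop i w < drop k w" "drop k w < drop i w"
      using that Pi by (auto simp: word_less_iff_less)
    then show False by simp
  qed
  ultimately have "std_idx w = i" unfolding std_idx_def by (rule the_equality)
  then show "0 < std_idx w" "std_idx w < length w"
    "\<And>j. 0 < j \<Longrightarrow> j < length w \<Longrightarrow> j \<noteq> std_idx w \<Longrightarrow> drop (std_idx w) w < drop j w"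
    using Pi by (auto simp: word_less_iff_less)
qed

definition std_fst :: "'a::linorder list \<Rightarrow> 'a list" where
  "std_fst w = take (std_idx w) w"

definition std_snd :: "'a::linorder list \<Rightarrow> 'a list" where
  "std_snd w = drop (std_idx w) w"

lemma std_factorization:
  assumes "2 \<le> length w"
  shows "std_fst w @ std_snd w = w" "std_fst w \<noteq> []" "std_snd w \<noteq> []"
    "length (std_fst w) < length w" "length (std_snd w) < length w"
  using std_idx_minimal[OF assms] by (auto simp: std_fst_def std_snd_def)

lemma lyn_mon_letter: "lyn_mon [y] = gen y"
  by simp

lemma lyn_mon_std:
  assumes "2 \<le> length w"
  shows "lyn_mon w = mmul (lyn_mon (std_fst w)) (lyn_mon (std_snd w))"
  using assms std_idx_minimal[OF assms] by (simp add: std_fst_def std_snd_def)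

declare lyn_mon.simps [simp del]

lemma std_induct [consumes 1, case_names letter std]:
  assumes "w \<noteq> []"
    and "\<And>y. P [y]"
    and "\<And>w. 2 \<le> length w \<Longrightarrow> P (std_fst w) \<Longrightarrow> P (std_snd w) \<Longrightarrow> P w"
  shows "P w"
  using assms(1)
proof (induction "length w" arbitrary: w rule: less_induct)
  case less
  show ?case
  proof (cases "2 \<le> length w")
    case True
    then show ?thesis using assms(3) less std_factorization[OF True] by blast
  next
    case False
    moreover have "length w \<noteq> 0" using less.prems by simp
    ultimately have "length w = 1" by linarith
    then obtain y where "w = [y]" by (auto simp: length_Suc_conv)
    then show ?thesis using assms(2) by simp
  qed
qed

lemma std_snd_hd_le:
  assumes "2 \<le> length w" "x \<in> set (std_snd w)"
  shows "hd (std_snd w) \<le> x"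
proof -
  let ?i = "std_idx w"
  note idx = std_idx_minimal[OF assms(1)]
  obtain k where "k < length w - ?i" "w ! (?i + k) = x"
    using assms(2) idx by (auto simp: std_snd_def in_set_conv_nth)
  then obtain j where j: "?i \<le> j" "j < length w" "w ! j = x"
    by (intro that[of "?i + k"]) auto
  have hd: "hd (std_snd w) = w ! ?i" using idx by (simp add: std_snd_def hd_drop_conv_nth)
  show ?thesis
  proof (cases "j = ?i")
    case False
    then have "drop ?i w < drop j w" using idx j by simp
    moreover have "drop ?i w = w ! ?i # drop (Suc ?i) w" "drop j w = x # drop (Suc j) w"
      using idx j by (metis Cons_nth_drop_Suc)+
    ultimately have "w ! ?i # drop (Suc ?i) w < x # drop (Suc j) w" by simp
    then show ?thesis unfolding hd Cons_less_Cons by auto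
  qed (use j hd in simp)
qed

lemma distinct_lyndon_std:
  assumes "lyndon w" "distinct w" "2 \<le> length w"
  shows "distinct (std_fst w)" "distinct (std_snd w)"
    "lyndon (std_fst w)" "lyndon (std_snd w)" "w < std_snd w"
proof -
  note fact = std_factorization[OF assms(3)]
  show dist: "distinct (std_fst w)" "distinct (std_snd w)"
    using assms(2) by (simp_all add: std_fst_def std_snd_def)
  show "w < std_snd w"
    using assms(1) std_idx_minimal[OF assms(3)] by (simp add: lyndon_iff_less std_snd_def)
  have "hd (std_fst w) = hd w" using fact by (metis hd_append2)
  moreover have "set (std_fst w) \<subseteq> set w" by (simp add: std_fst_def set_take_subset)
  ultimately have "hd (std_fst w) \<le> x" if "x \<in> set (std_fst w)" for x
    using lyndon_hd_le[OF assms(1)] that by auto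
  then show "lyndon (std_fst w)"
    using dist(1) fact by (simp add: distinct_lyndon_iff)
  show "lyndon (std_snd w)"
    using dist(2) fact std_snd_hd_le[OF assms(3)] by (simp add: distinct_lyndon_iff)
qed

definition supp :: "('a btree \<Rightarrow> int) \<Rightarrow> 'a btree set" where
  "supp p = {t. p t \<noteq> 0}"

lemma fin_supp_iff_finite_supp: "fin_supp p \<longleftrightarrow> finite (supp p)"
  by (simp add: fin_supp_def supp_def)

lemma fin_supp_zero: "fin_supp (\<lambda>_. 0)"
  by (simp add: fin_supp_def)

lemma fin_supp_gen: "fin_supp (gen y)"
  by (simp add: fin_supp_def gen_def)

lemma fin_supp_add: "fin_supp p \<Longrightarrow> fin_supp q \<Longrightarrow> fin_supp (\<lambda>t. p t + q t)"
  unfolding fin_supp_def by (rule finite_subset[of _ "{t. p t \<noteq> 0} \<union> {t. q t \<noteq> 0}"]) auto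

lemma fin_supp_smult: "fin_supp p \<Longrightarrow> fin_supp (\<lambda>t. k * p t)"
  unfolding fin_supp_def by (rule finite_subset[of _ "{t. p t \<noteq> 0}"]) auto

lemma fin_supp_sum:
  "finite I \<Longrightarrow> (\<And>i. i \<in> I \<Longrightarrow> fin_supp (f i)) \<Longrightarrow> fin_supp (\<lambda>t. \<Sum>i\<in>I. f i t)"
  by (induction rule: finite_induct) (simp_all add: fin_supp_zero fin_supp_add)

lemma supp_mmul: "supp (mmul p q) \<subseteq> (\<lambda>(u, v). Br u v) ` (supp p \<times> supp q)"
proof
  fix t assume "t \<in> supp (mmul p q)"
  then show "t \<in> (\<lambda>(u, v). Br u v) ` (supp p \<times> supp q)"
    by (cases t) (force simp: supp_def mmul_def)+
qed

lemma fin_supp_mmul: "fin_supp p \<Longrightarrow> fin_supp q \<Longrightarrow> fin_supp (mmul p q)"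
  unfolding fin_supp_iff_finite_supp by (rule finite_subset[OF supp_mmul]) auto

lemma fin_supp_rnorm: "fin_supp (rnorm ys)"
  by (induction ys rule: rnorm.induct) (simp_all add: fin_supp_zero fin_supp_gen fin_supp_mmul)

lemma fin_supp_lyn_mon: "fin_supp (lyn_mon w)"
proof (cases "w = []")
  case True
  then show ?thesis by (simp add: lyn_mon.simps fin_supp_gen)
next
  case False
  then show ?thesis
    by (induction w rule: std_induct) (simp_all add: lyn_mon_letter lyn_mon_std fin_supp_gen fin_supp_mmul)
qed

lemma mmul_add_left: "mmul (\<lambda>t. p t + q t) r = (\<lambda>t. mmul p r t + mmul q r t)"
  and mmul_add_right: "mmul r (\<lambda>t. p t + q t) = (\<lambda>t. mmul r p t + mmul r q t)"
  and mmul_diff_left: "mmul (\<lambda>t. p t - q t) r = (\<lambda>t. mmul p r t - mmul q r t)"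
  and mmul_diff_right: "mmul r (\<lambda>t. p t - q t) = (\<lambda>t. mmul r p t - mmul r q t)"
  and mmul_smult_left: "mmul (\<lambda>t. k * p t) r = (\<lambda>t. k * mmul p r t)"
  and mmul_smult_right: "mmul r (\<lambda>t. k * p t) = (\<lambda>t. k * mmul r p t)"
  and mmul_zero_left: "mmul (\<lambda>_. 0) r = (\<lambda>_. 0)"
  and mmul_zero_right: "mmul r (\<lambda>_. 0) = (\<lambda>_. 0)"
  by (auto simp: mmul_def algebra_simps split: btree.split)

lemma mmul_sum_left: "finite I \<Longrightarrow> mmul (\<lambda>t. \<Sum>i\<in>I. f i t) r = (\<lambda>t. \<Sum>i\<in>I. mmul (f i) r t)"
  by (induction rule: finite_induct) (simp_all add: mmul_zero_left mmul_add_left)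

lemma mmul_sum_right: "finite I \<Longrightarrow> mmul r (\<lambda>t. \<Sum>i\<in>I. f i t) = (\<lambda>t. \<Sum>i\<in>I. mmul r (f i) t)"
  by (induction rule: finite_induct) (simp_all add: mmul_zero_right mmul_add_right)

lemma fin_supp_rl_ideal: "p \<in> rl_ideal \<Longrightarrow> fin_supp p"
  by (induction rule: rl_ideal.induct)
    (simp_all add: fin_supp_mmul fin_supp_add fin_supp_rnorm fin_supp_zero
      fin_supp_smult[of _ "-1", simplified])

lemma rl_ideal_eq:
  assumes "p \<in> rl_ideal" "\<And>t. p t = q t"
  shows "q \<in> rl_ideal"
proof -
  have "p = q" using assms(2) by (rule ext)
  then show ?thesis using assms(1) by simp
qed

lemma rl_ideal_diff: "p \<in> rl_ideal \<Longrightarrow> q \<in> rl_ideal \<Longrightarrow> (\<lambda>t. p t - q t) \<in> rl_ideal"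
  using rl_ideal.add[OF _ rl_ideal.neg[of q], of p] by simp

lemma rl_ideal_smult: "p \<in> rl_ideal \<Longrightarrow> (\<lambda>t. k * p t) \<in> rl_ideal"
proof -
  assume p: "p \<in> rl_ideal"
  have nat: "(\<lambda>t. int n * p t) \<in> rl_ideal" for n
  proof (induction n)
    case 0
    then show ?case using rl_ideal.zero by simp
  next
    case (Suc n)
    then have "(\<lambda>t. int n * p t + p t) \<in> rl_ideal" using p by (rule rl_ideal.add)
    then show ?case by (rule rl_ideal_eq) (simp add: algebra_simps)
  qed
  show ?thesis
  proof (cases "k \<ge> 0")
    case True
    then show ?thesis using nat[of "nat k"] by simp
  next
    case False
    then show ?thesis using rl_ideal.neg[OF nat[of "nat (- k)"]] by simp
  qed
qed

lemma rl_eq_refl: "rl_eq x x"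
  by (simp add: rl_eq_def rl_ideal.zero)

lemma rl_eq_sym: "rl_eq x y \<Longrightarrow> rl_eq y x"
  unfolding rl_eq_def by (drule rl_ideal.neg) simp

lemma rl_eq_trans: "rl_eq x y \<Longrightarrow> rl_eq y z \<Longrightarrow> rl_eq x z"
  unfolding rl_eq_def by (drule (1) rl_ideal.add) simp

lemma rl_eq_add: "rl_eq x x' \<Longrightarrow> rl_eq y y' \<Longrightarrow> rl_eq (\<lambda>t. x t + y t) (\<lambda>t. x' t + y' t)"
  unfolding rl_eq_def by (drule (1) rl_ideal.add) (simp add: algebra_simps)

lemma rl_eq_diff: "rl_eq x x' \<Longrightarrow> rl_eq y y' \<Longrightarrow> rl_eq (\<lambda>t. x t - y t) (\<lambda>t. x' t - y' t)"
  unfolding rl_eq_def by (drule (1) rl_ideal_diff) (simp add: algebra_simps)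

lemma rl_eq_smult: "rl_eq x x' \<Longrightarrow> rl_eq (\<lambda>t. k * x t) (\<lambda>t. k * x' t)"
  unfolding rl_eq_def by (drule rl_ideal_smult[of _ k]) (simp add: algebra_simps)

lemma rl_eq_mmul_left: "fin_supp a \<Longrightarrow> rl_eq x y \<Longrightarrow> rl_eq (mmul a x) (mmul a y)"
  unfolding rl_eq_def by (drule (1) rl_ideal.mult_left) (simp add: mmul_diff_right)

lemma rl_eq_mmul_right: "fin_supp a \<Longrightarrow> rl_eq x y \<Longrightarrow> rl_eq (mmul x a) (mmul y a)"
  unfolding rl_eq_def by (drule (1) rl_ideal.mult_right) (simp add: mmul_diff_left)

lemma rl_eq_anticomm:
  assumes a: "fin_supp a" and b: "fin_supp b"
  shows "rl_eq (mmul a b) (\<lambda>t. - mmul b a t)"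
proof -
  have "mmul (\<lambda>t. a t + b t) (\<lambda>t. a t + b t) \<in> rl_ideal"
    using a b by (intro rl_ideal.alt fin_supp_add)
  moreover have "mmul a a \<in> rl_ideal" "mmul b b \<in> rl_ideal"
    using a b by (auto intro: rl_ideal.alt)
  ultimately have "(\<lambda>t. mmul (\<lambda>t. a t + b t) (\<lambda>t. a t + b t) t - mmul a a t - mmul b b t) \<in> rl_ideal"
    by (intro rl_ideal_diff)
  then show ?thesis unfolding rl_eq_def
    by (rule rl_ideal_eq) (simp add: mmul_add_left mmul_add_right)
qed

lemma rl_eq_jacobi:
  assumes a: "fin_supp a" and b: "fin_supp b" and c: "fin_supp c"
  shows "rl_eq (mmul a (mmul b c)) (\<lambda>t. mmul (mmul a b) c t - mmul (mmul a c) b t)"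
proof -
  have jac: "(\<lambda>t. mmul a (mmul b c) t + mmul b (mmul c a) t + mmul c (mmul a b) t) \<in> rl_ideal"
    using a b c by (rule rl_ideal.jacobi)
  have anti1: "(\<lambda>t. mmul b (mmul c a) t + mmul (mmul c a) b t) \<in> rl_ideal"
    using rl_eq_anticomm[OF b fin_supp_mmul[OF c a]] by (simp add: rl_eq_def)
  have anti2: "(\<lambda>t. mmul (mmul c a) b t + mmul (mmul a c) b t) \<in> rl_ideal"
    using rl_ideal.mult_right[OF b, of "\<lambda>t. mmul c a t + mmul a c t"] rl_eq_anticomm[OF c a]
    by (simp add: rl_eq_def mmul_add_left)
  have anti3: "(\<lambda>t. mmul c (mmul a b) t + mmul (mmul a b) c t) \<in> rl_ideal"
    using rl_eq_anticomm[OF c fin_supp_mmul[OF a b]] by (simp add: rl_eq_def)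
  have "(\<lambda>t. (mmul a (mmul b c) t + mmul b (mmul c a) t + mmul c (mmul a b) t)
      - (mmul b (mmul c a) t + mmul (mmul c a) b t) + (mmul (mmul c a) b t + mmul (mmul a c) b t)
      - (mmul c (mmul a b) t + mmul (mmul a b) c t)) \<in> rl_ideal"
    by (rule rl_ideal_diff[OF rl_ideal.add[OF rl_ideal_diff[OF jac anti1] anti2] anti3])
  then show ?thesis unfolding rl_eq_def by (rule rl_ideal_eq) (simp add: algebra_simps)
qed

section \<open>The embedding into the free associative ring\<close>

text \<open>Elements of \<open>\<int>\<langle>Y\<rangle>\<close> are coefficient functions on words; \<open>word_prod\<close> is their product.\<close>

definition word_prod :: "('a list \<Rightarrow> int) \<Rightarrow> ('a list \<Rightarrow> int) \<Rightarrow> 'a list \<Rightarrow> int" where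
  "word_prod f g w = (\<Sum>i\<le>length w. f (take i w) * g (drop i w))"

definition word_bracket :: "('a list \<Rightarrow> int) \<Rightarrow> ('a list \<Rightarrow> int) \<Rightarrow> 'a list \<Rightarrow> int" where
  "word_bracket f g w = word_prod f g w - word_prod g f w"

lemma word_prod_diff_left: "word_prod (\<lambda>x. f x - g x) h = (\<lambda>w. word_prod f h w - word_prod g h w)"
  by (rule ext) (simp add: word_prod_def left_diff_distrib sum_subtractf)

lemma word_prod_diff_right: "word_prod h (\<lambda>x. f x - g x) = (\<lambda>w. word_prod h f w - word_prod h g w)"
  by (rule ext) (simp add: word_prod_def right_diff_distrib sum_subtractf)

lemma word_prod_assoc: "word_prod (word_prod f g) h = word_prod f (word_prod g h)"
proof (rule ext)
  fix w :: "'a list"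
  let ?n = "length w"
  let ?G = "\<lambda>i j. f (take i w) * g (take j (drop i w)) * h (drop (i + j) w)"
  have "word_prod (word_prod f g) h w = (\<Sum>k\<le>?n. \<Sum>i\<le>k. ?G i (k - i))"
    unfolding word_prod_def sum_distrib_right
    by (rule sum.cong[OF refl], simp, rule sum.cong) (auto simp: min_def take_drop)
  also have "\<dots> = (\<Sum>(i, j)\<in>{(i, j). i + j \<le> ?n}. ?G i j)"
    by (rule sum.triangle_reindex_eq[symmetric])
  also have "{(i, j). i + j \<le> ?n} = Sigma {..?n} (\<lambda>i. {..?n - i})"
    by auto
  also have "(\<Sum>(i, j)\<in>Sigma {..?n} (\<lambda>i. {..?n - i}). ?G i j) = (\<Sum>i\<le>?n. \<Sum>j\<le>?n - i. ?G i j)"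
    by (rule sum.Sigma[symmetric]) auto
  also have "\<dots> = word_prod f (word_prod g h) w"
    unfolding word_prod_def sum_distrib_left
    by (rule sum.cong[OF refl], rule sum.cong) (auto simp: mult.assoc add.commute)
  finally show "word_prod (word_prod f g) h w = word_prod f (word_prod g h) w" .
qed

lemma word_bracket_self: "word_bracket f f w = 0"
  by (simp add: word_bracket_def)

lemma word_bracket_Nil: "word_bracket f g [] = 0"
  by (simp add: word_bracket_def word_prod_def)

lemma word_bracket_jacobi:
  "word_bracket a (word_bracket b c) w + word_bracket b (word_bracket c a) w
    + word_bracket c (word_bracket a b) w = 0"
  unfolding word_bracket_def[abs_def] word_prod_diff_left word_prod_diff_right word_prod_assoc
  by simp

lemma word_prod_nonzero:
  assumes "word_prod f g w \<noteq> 0"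
  obtains a b where "w = a @ b" "f a \<noteq> 0" "g b \<noteq> 0"
proof -
  have "\<exists>i. f (take i w) * g (drop i w) \<noteq> 0"
  proof (rule ccontr)
    assume "\<nexists>i. f (take i w) * g (drop i w) \<noteq> 0"
    then have "word_prod f g w = 0" unfolding word_prod_def by (intro sum.neutral) auto
    with assms show False by simp
  qed
  then obtain i where "f (take i w) \<noteq> 0" "g (drop i w) \<noteq> 0" by auto
  then show ?thesis using that[of "take i w" "drop i w"] by simp
qed

lemma word_bracket_vanishes_distinct:
  assumes "\<And>x. distinct x \<Longrightarrow> g x = 0" "distinct w"
  shows "word_bracket f g w = 0" "word_bracket g f w = 0"
proof -
  have "word_prod f g w = 0" "word_prod g f w = 0"
    using assms by (auto simp: word_prod_def intro!: sum.neutral dest: distinct_take distinct_drop)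
  then show "word_bracket f g w = 0" "word_bracket g f w = 0"
    by (simp_all add: word_bracket_def)
qed

lemma word_prod_split:
  assumes "\<And>x. f x \<noteq> 0 \<Longrightarrow> length x = length u"
  shows "word_prod f g (u @ v) = f u * g v"
proof -
  have "f (take i (u @ v)) = 0" if "i \<le> length (u @ v)" "i \<noteq> length u" for i
  proof (rule ccontr)
    assume "f (take i (u @ v)) \<noteq> 0"
    then have "length (take i (u @ v)) = length u" by (rule assms)
    with that show False by (auto simp: min_def split: if_splits)
  qed
  then have "word_prod f g (u @ v) = (\<Sum>i\<in>{length u}. f (take i (u @ v)) * g (drop i (u @ v)))"
    unfolding word_prod_def by (intro sum.mono_neutral_right) auto
  then show ?thesis by simp
qed

lemma word_prod_letter_left:
  "word_prod (\<lambda>x. if x = [c] then 1 else 0) g w = (if w \<noteq> [] \<and> hd w = c then g (tl w) else 0)"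
proof -
  have "take i w = [c] \<longleftrightarrow> i = 1 \<and> w \<noteq> [] \<and> hd w = c" if "i \<le> length w" for i
    using that by (cases w; cases i) auto
  then have "word_prod (\<lambda>x. if x = [c] then 1 else 0) g w
      = (\<Sum>i\<le>length w. if i = 1 then (if w \<noteq> [] \<and> hd w = c then g (drop i w) else 0) else 0)"
    unfolding word_prod_def by (intro sum.cong) auto
  also have "\<dots> = (if w \<noteq> [] \<and> hd w = c then g (tl w) else 0)"
    by (cases w) (simp_all add: Suc_le_eq drop_Suc)
  finally show ?thesis .
qed

lemma word_prod_letter_right:
  "word_prod f (\<lambda>x. if x = [c] then 1 else 0) w
    = (if w \<noteq> [] \<and> last w = c then f (butlast w) else 0)"
proof -
  have "drop i w = [c] \<longleftrightarrow> i = length w - 1 \<and> w \<noteq> [] \<and> last w = c" if "i \<le> length w" for i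
    using that by (cases w rule: rev_cases) (auto simp: Suc_diff_le le_Suc_eq)
  then have "word_prod f (\<lambda>x. if x = [c] then 1 else 0) w
      = (\<Sum>i\<le>length w. if i = length w - 1 then
          (if w \<noteq> [] \<and> last w = c then f (take i w) else 0) else 0)"
    unfolding word_prod_def by (intro sum.cong) auto
  also have "\<dots> = (if w \<noteq> [] \<and> last w = c then f (butlast w) else 0)"
    by (simp add: butlast_conv_take)
  finally show ?thesis .
qed

definition multihomog :: "'a multiset \<Rightarrow> ('a list \<Rightarrow> int) \<Rightarrow> bool" where
  "multihomog M f \<longleftrightarrow> (\<forall>w. f w \<noteq> 0 \<longrightarrow> mset w = M)"

lemma multihomog_word_prod:
  assumes "multihomog M f" "multihomog N g"
  shows "multihomog (M + N) (word_prod f g)"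
  unfolding multihomog_def
proof (intro allI impI)
  fix w assume "word_prod f g w \<noteq> 0"
  then obtain a b where "w = a @ b" "f a \<noteq> 0" "g b \<noteq> 0"
    by (rule word_prod_nonzero)
  then show "mset w = M + N" using assms by (auto simp: multihomog_def)
qed

lemma multihomog_word_bracket:
  assumes "multihomog M f" "multihomog N g"
  shows "multihomog (M + N) (word_bracket f g)"
proof -
  have "multihomog (M + N) (word_prod f g)" "multihomog (M + N) (word_prod g f)"
    using multihomog_word_prod[OF assms] multihomog_word_prod[OF assms(2,1)] by (simp_all add: add.commute)
  then show ?thesis unfolding multihomog_def word_bracket_def by (metis diff_self)
qed

fun tree_poly :: "'a btree \<Rightarrow> 'a list \<Rightarrow> int" where
  "tree_poly (Leaf y) = (\<lambda>w. if w = [y] then 1 else 0)"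
| "tree_poly (Br s t) = word_bracket (tree_poly s) (tree_poly t)"

definition assoc_poly :: "('a btree \<Rightarrow> int) \<Rightarrow> 'a list \<Rightarrow> int" where
  "assoc_poly p w = (\<Sum>t\<in>supp p. p t * tree_poly t w)"

lemma assoc_poly_superset:
  "finite B \<Longrightarrow> supp p \<subseteq> B \<Longrightarrow> assoc_poly p w = (\<Sum>t\<in>B. p t * tree_poly t w)"
  unfolding assoc_poly_def by (rule sum.mono_neutral_left) (auto simp: supp_def)

lemma assoc_poly_zero: "assoc_poly (\<lambda>_. 0) w = 0"
  by (simp add: assoc_poly_def supp_def)

lemma assoc_poly_Nil: "assoc_poly p [] = 0"
proof -
  have "tree_poly t [] = 0" for t :: "'a btree"
    by (cases t) (simp_all add: word_bracket_Nil)
  then show ?thesis by (simp add: assoc_poly_def)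
qed

lemma assoc_poly_gen: "assoc_poly (gen y) = tree_poly (Leaf y)"
proof (rule ext)
  fix w
  have "supp (gen y) = {Leaf y}" by (auto simp: supp_def gen_def)
  then show "assoc_poly (gen y) w = tree_poly (Leaf y) w" by (simp add: assoc_poly_def gen_def)
qed

lemma assoc_poly_add:
  assumes "fin_supp p" "fin_supp q"
  shows "assoc_poly (\<lambda>t. p t + q t) w = assoc_poly p w + assoc_poly q w"
proof -
  let ?B = "supp p \<union> supp q"
  have B: "finite ?B" using assms by (simp add: fin_supp_iff_finite_supp)
  have "assoc_poly (\<lambda>t. p t + q t) w = (\<Sum>t\<in>?B. (p t + q t) * tree_poly t w)"
    by (rule assoc_poly_superset[OF B]) (auto simp: supp_def)
  also have "\<dots> = (\<Sum>t\<in>?B. p t * tree_poly t w) + (\<Sum>t\<in>?B. q t * tree_poly t w)"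
    by (simp add: distrib_right sum.distrib)
  also have "\<dots> = assoc_poly p w + assoc_poly q w"
    using assoc_poly_superset[OF B, of p] assoc_poly_superset[OF B, of q] by simp
  finally show ?thesis .
qed

lemma assoc_poly_smult: "assoc_poly (\<lambda>t. k * p t) w = k * assoc_poly p w"
proof (cases "k = 0")
  case True
  then show ?thesis by (simp add: assoc_poly_zero)
next
  case False
  then have "supp (\<lambda>t. k * p t) = supp p" by (auto simp: supp_def)
  then show ?thesis by (simp add: assoc_poly_def sum_distrib_left mult.assoc)
qed

lemma assoc_poly_diff:
  "fin_supp p \<Longrightarrow> fin_supp q \<Longrightarrow> assoc_poly (\<lambda>t. p t - q t) w = assoc_poly p w - assoc_poly q w"
  using assoc_poly_add[of p "\<lambda>t. -1 * q t" w] assoc_poly_smult[of "-1" q w]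
    fin_supp_smult[of q "-1"] by simp

lemma assoc_poly_sum:
  "finite I \<Longrightarrow> (\<And>i. i \<in> I \<Longrightarrow> fin_supp (f i)) \<Longrightarrow>
    assoc_poly (\<lambda>t. \<Sum>i\<in>I. f i t) w = (\<Sum>i\<in>I. assoc_poly (f i) w)"
  by (induction rule: finite_induct) (simp_all add: assoc_poly_zero assoc_poly_add fin_supp_sum)

lemma word_prod_sums:
  assumes "finite A" "finite B"
  shows "word_prod (\<lambda>x. \<Sum>u\<in>A. a u * F u x) (\<lambda>x. \<Sum>v\<in>B. b v * G v x) w
       = (\<Sum>u\<in>A. \<Sum>v\<in>B. a u * b v * word_prod (F u) (G v) w)"
proof -
  have "word_prod (\<lambda>x. \<Sum>u\<in>A. a u * F u x) (\<lambda>x. \<Sum>v\<in>B. b v * G v x) w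
     = (\<Sum>i\<le>length w. \<Sum>u\<in>A. \<Sum>v\<in>B. a u * b v * (F u (take i w) * G v (drop i w)))"
    unfolding word_prod_def sum_product by (simp add: ac_simps)
  also have "\<dots> = (\<Sum>u\<in>A. \<Sum>v\<in>B. \<Sum>i\<le>length w. a u * b v * (F u (take i w) * G v (drop i w)))"
    by (subst sum.swap, rule sum.cong[OF refl], rule sum.swap)
  also have "\<dots> = (\<Sum>u\<in>A. \<Sum>v\<in>B. a u * b v * word_prod (F u) (G v) w)"
    by (simp add: word_prod_def sum_distrib_left)
  finally show ?thesis .
qed

lemma assoc_poly_mmul:
  assumes "fin_supp p" "fin_supp q"
  shows "assoc_poly (mmul p q) = word_bracket (assoc_poly p) (assoc_poly q)"
proof (rule ext)
  fix w
  let ?A = "supp p" and ?B = "supp q"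
  have A: "finite ?A" and B: "finite ?B" using assms by (auto simp: fin_supp_iff_finite_supp)
  have inj: "inj_on (\<lambda>(u, v). Br u v) (?A \<times> ?B)" by (auto simp: inj_on_def)
  have "assoc_poly (mmul p q) w = (\<Sum>t\<in>(\<lambda>(u, v). Br u v) ` (?A \<times> ?B). mmul p q t * tree_poly t w)"
    using A B by (intro assoc_poly_superset supp_mmul) auto
  also have "\<dots> = (\<Sum>(u, v)\<in>?A \<times> ?B. p u * q v * tree_poly (Br u v) w)"
    by (subst sum.reindex[OF inj]) (simp add: case_prod_beta mmul_def)
  also have "\<dots> = (\<Sum>u\<in>?A. \<Sum>v\<in>?B. p u * q v * word_prod (tree_poly u) (tree_poly v) w)
               - (\<Sum>u\<in>?A. \<Sum>v\<in>?B. p u * q v * word_prod (tree_poly v) (tree_poly u) w)"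
    by (simp add: sum.cartesian_product[symmetric] word_bracket_def right_diff_distrib sum_subtractf)
  also have "(\<Sum>u\<in>?A. \<Sum>v\<in>?B. p u * q v * word_prod (tree_poly u) (tree_poly v) w)
      = word_prod (assoc_poly p) (assoc_poly q) w"
    unfolding assoc_poly_def[abs_def] by (rule word_prod_sums[symmetric, OF A B])
  also have "(\<Sum>u\<in>?A. \<Sum>v\<in>?B. p u * q v * word_prod (tree_poly v) (tree_poly u) w)
      = word_prod (assoc_poly q) (assoc_poly p) w"
    unfolding assoc_poly_def[abs_def] word_prod_sums[OF B A]
    by (subst sum.swap) (simp add: ac_simps)
  finally show "assoc_poly (mmul p q) w = word_bracket (assoc_poly p) (assoc_poly q) w"
    by (simp add: word_bracket_def)
qed

lemma multihomog_assoc_poly_rnorm: "ys \<noteq> [] \<Longrightarrow> multihomog (mset ys) (assoc_poly (rnorm ys))"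
proof (induction ys rule: rnorm.induct)
  case (3 y v va)
  have "multihomog ({#y#} + mset (v # va)) (word_bracket (assoc_poly (gen y)) (assoc_poly (rnorm (v # va))))"
    using 3 by (intro multihomog_word_bracket) (auto simp: assoc_poly_gen multihomog_def)
  then show ?case by (simp add: assoc_poly_mmul fin_supp_gen fin_supp_rnorm add_mset_commute)
qed (simp_all add: assoc_poly_gen multihomog_def)

lemma assoc_poly_rl_ideal: "p \<in> rl_ideal \<Longrightarrow> distinct w \<Longrightarrow> assoc_poly p w = 0"
proof (induction arbitrary: w rule: rl_ideal.induct)
  case (alt a)
  then show ?case by (simp add: assoc_poly_mmul word_bracket_self)
next
  case (jacobi a b c)
  then show ?case
    by (simp add: assoc_poly_add assoc_poly_mmul fin_supp_mmul fin_supp_add word_bracket_jacobi)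
next
  case (rep ys)
  show ?case
  proof (rule ccontr)
    assume "assoc_poly (rnorm ys) w \<noteq> 0"
    moreover have "ys \<noteq> []" using rep by auto
    ultimately have "mset w = mset ys"
      using multihomog_assoc_poly_rnorm by (auto simp: multihomog_def)
    then show False using rep mset_eq_imp_distinct_iff by blast
  qed
next
  case zero
  then show ?case by (simp add: assoc_poly_zero)
next
  case (add p q)
  then show ?case by (simp add: assoc_poly_add fin_supp_rl_ideal)
next
  case (neg p)
  then show ?case using assoc_poly_smult[of "-1" p w] by simp
next
  case (mult_left a p)
  then show ?case by (simp add: assoc_poly_mmul fin_supp_rl_ideal word_bracket_vanishes_distinct)
next
  case (mult_right a p)
  then show ?case by (simp add: assoc_poly_mmul fin_supp_rl_ideal word_bracket_vanishes_distinct)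
qed

lemma rl_eq_assoc_poly:
  assumes "rl_eq x y" "fin_supp x" "fin_supp y" "distinct w"
  shows "assoc_poly x w = assoc_poly y w"
  using assoc_poly_rl_ideal[of "\<lambda>t. x t - y t"] assms by (simp add: rl_eq_def assoc_poly_diff)

definition comb :: "('b \<Rightarrow> 'a btree \<Rightarrow> int) \<Rightarrow> ('b \<Rightarrow> int) \<Rightarrow> 'a btree \<Rightarrow> int" where
  "comb F c = (\<lambda>t. \<Sum>w | c w \<noteq> 0. c w * F w t)"

definition in_span :: "('b \<Rightarrow> 'a btree \<Rightarrow> int) \<Rightarrow> 'b set \<Rightarrow> ('a btree \<Rightarrow> int) \<Rightarrow> bool" where
  "in_span F S x \<longleftrightarrow> (\<exists>c. finite {w. c w \<noteq> 0} \<and> {w. c w \<noteq> 0} \<subseteq> S \<and> rl_eq x (comb F c))"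

lemma lyn_comb_eq_comb: "lyn_comb = comb lyn_mon"
  by (simp add: fun_eq_iff lyn_comb_def comb_def)

lemma comb_superset:
  "finite A \<Longrightarrow> {w. c w \<noteq> 0} \<subseteq> A \<Longrightarrow> comb F c t = (\<Sum>w\<in>A. c w * F w t)"
  unfolding comb_def by (rule sum.mono_neutral_left) auto

lemma fin_supp_comb: "finite {w. c w \<noteq> 0} \<Longrightarrow> (\<And>w. fin_supp (F w)) \<Longrightarrow> fin_supp (comb F c)"
  unfolding comb_def by (intro fin_supp_sum fin_supp_smult)

lemma assoc_poly_comb:
  "finite {w. c w \<noteq> 0} \<Longrightarrow> (\<And>w. fin_supp (F w)) \<Longrightarrow>
    assoc_poly (comb F c) x = (\<Sum>w | c w \<noteq> 0. c w * assoc_poly (F w) x)"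
  unfolding comb_def by (simp add: assoc_poly_sum assoc_poly_smult fin_supp_smult)

lemma in_span_rl_eq: "rl_eq x y \<Longrightarrow> in_span F S y \<Longrightarrow> in_span F S x"
  unfolding in_span_def using rl_eq_trans by blast

lemma in_span_mono: "in_span F S x \<Longrightarrow> S \<subseteq> T \<Longrightarrow> in_span F T x"
  unfolding in_span_def by blast

lemma in_span_zero: "in_span F S (\<lambda>_. 0)"
  unfolding in_span_def by (rule exI[of _ "\<lambda>_. 0"]) (simp add: comb_def rl_eq_refl)

lemma in_span_basis: "w \<in> S \<Longrightarrow> in_span F S (F w)"
  unfolding in_span_def
  by (rule exI[of _ "\<lambda>v. if v = w then 1 else 0"]) (simp add: comb_def rl_eq_refl)

lemma in_span_add:
  assumes "in_span F S x" "in_span F S y"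
  shows "in_span F S (\<lambda>t. x t + y t)"
proof -
  obtain c d where c: "finite {w. c w \<noteq> 0}" "{w. c w \<noteq> 0} \<subseteq> S" "rl_eq x (comb F c)"
    and d: "finite {w. d w \<noteq> 0}" "{w. d w \<noteq> 0} \<subseteq> S" "rl_eq y (comb F d)"
    using assms unfolding in_span_def by blast
  let ?A = "{w. c w \<noteq> 0} \<union> {w. d w \<noteq> 0}"
  have A: "finite ?A" using c d by simp
  have sub: "{w. c w + d w \<noteq> 0} \<subseteq> ?A" and sc: "{w. c w \<noteq> 0} \<subseteq> ?A"
    and sd: "{w. d w \<noteq> 0} \<subseteq> ?A" by auto
  have "comb F (\<lambda>w. c w + d w) t = comb F c t + comb F d t" for t
    unfolding comb_superset[OF A sub, of F t] comb_superset[OF A sc, of F t] comb_superset[OF A sd, of F t]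
    by (simp add: sum.distrib distrib_right)
  then have "comb F (\<lambda>w. c w + d w) = (\<lambda>t. comb F c t + comb F d t)" by (rule ext)
  then have "rl_eq (\<lambda>t. x t + y t) (comb F (\<lambda>w. c w + d w))"
    using rl_eq_add[OF c(3) d(3)] by simp
  moreover have "finite {w. c w + d w \<noteq> 0}" using A sub by (rule finite_subset[rotated])
  ultimately show ?thesis
    unfolding in_span_def using sub c(2) d(2) by (intro exI[of _ "\<lambda>w. c w + d w"]) blast
qed

lemma in_span_smult:
  assumes "in_span F S x"
  shows "in_span F S (\<lambda>t. k * x t)"
proof -
  obtain c where c: "finite {w. c w \<noteq> 0}" "{w. c w \<noteq> 0} \<subseteq> S" "rl_eq x (comb F c)"
    using assms unfolding in_span_def by blast
  have sub: "{w. k * c w \<noteq> 0} \<subseteq> {w. c w \<noteq> 0}" by auto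
  have "comb F (\<lambda>w. k * c w) t = k * comb F c t" for t
    unfolding comb_superset[OF c(1) sub, of F t] comb_superset[OF c(1) order_refl, of F t]
    by (simp add: sum_distrib_left mult.assoc)
  then have "comb F (\<lambda>w. k * c w) = (\<lambda>t. k * comb F c t)" by (rule ext)
  then have "rl_eq (\<lambda>t. k * x t) (comb F (\<lambda>w. k * c w))"
    using rl_eq_smult[OF c(3), of k] by simp
  moreover have "finite {w. k * c w \<noteq> 0}" using c(1) sub by (rule finite_subset[rotated])
  ultimately show ?thesis
    unfolding in_span_def using sub c(2) by (intro exI[of _ "\<lambda>w. k * c w"]) blast
qed

lemma in_span_diff: "in_span F S x \<Longrightarrow> in_span F S y \<Longrightarrow> in_span F S (\<lambda>t. x t - y t)"
  using in_span_add[of F S x "\<lambda>t. -1 * y t"] in_span_smult[of F S y "-1"] by simp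

lemma in_span_sum:
  "finite I \<Longrightarrow> (\<And>i. i \<in> I \<Longrightarrow> in_span F S (f i)) \<Longrightarrow> in_span F S (\<lambda>t. \<Sum>i\<in>I. f i t)"
  by (induction rule: finite_induct) (simp_all add: in_span_zero in_span_add)

lemma in_span_comb:
  "finite {w. c w \<noteq> 0} \<Longrightarrow> (\<And>w. c w \<noteq> 0 \<Longrightarrow> in_span G T (F w)) \<Longrightarrow> in_span G T (comb F c)"
  unfolding comb_def by (rule in_span_sum) (auto intro: in_span_smult)

lemma in_span_trans:
  assumes "in_span F S x" "\<And>w. w \<in> S \<Longrightarrow> in_span G T (F w)"
  shows "in_span G T x"
proof -
  obtain c where c: "finite {w. c w \<noteq> 0}" "{w. c w \<noteq> 0} \<subseteq> S" "rl_eq x (comb F c)"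
    using assms(1) unfolding in_span_def by blast
  have "in_span G T (comb F c)" using c assms(2) by (intro in_span_comb) auto
  then show ?thesis using c(3) by (rule in_span_rl_eq[rotated])
qed

lemma in_span_mmul_left:
  assumes "in_span F S x" "fin_supp a" "\<And>w. w \<in> S \<Longrightarrow> in_span G T (mmul a (F w))"
  shows "in_span G T (mmul a x)"
proof -
  obtain c where c: "finite {w. c w \<noteq> 0}" "{w. c w \<noteq> 0} \<subseteq> S" "rl_eq x (comb F c)"
    using assms(1) unfolding in_span_def by blast
  have "mmul a (comb F c) = (\<lambda>t. \<Sum>w | c w \<noteq> 0. c w * mmul a (F w) t)"
    unfolding comb_def mmul_sum_right[OF c(1)] by (simp add: mmul_smult_right)
  moreover have "in_span G T (\<lambda>t. \<Sum>w | c w \<noteq> 0. c w * mmul a (F w) t)"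
    using c assms(3) by (intro in_span_sum in_span_smult) auto
  ultimately have "in_span G T (mmul a (comb F c))" by simp
  with rl_eq_mmul_left[OF assms(2) c(3)] show ?thesis by (rule in_span_rl_eq)
qed

lemma in_span_mmul_right:
  assumes "in_span F S x" "fin_supp a" "\<And>w. w \<in> S \<Longrightarrow> in_span G T (mmul (F w) a)"
  shows "in_span G T (mmul x a)"
proof -
  obtain c where c: "finite {w. c w \<noteq> 0}" "{w. c w \<noteq> 0} \<subseteq> S" "rl_eq x (comb F c)"
    using assms(1) unfolding in_span_def by blast
  have "mmul (comb F c) a = (\<lambda>t. \<Sum>w | c w \<noteq> 0. c w * mmul (F w) a t)"
    unfolding comb_def mmul_sum_left[OF c(1)] by (simp add: mmul_smult_left)
  moreover have "in_span G T (\<lambda>t. \<Sum>w | c w \<noteq> 0. c w * mmul (F w) a t)"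
    using c assms(3) by (intro in_span_sum in_span_smult) auto
  ultimately have "in_span G T (mmul (comb F c) a)" by simp
  with rl_eq_mmul_right[OF assms(2) c(3)] show ?thesis by (rule in_span_rl_eq)
qed

lemma in_span_unitriangular:
  fixes D :: "'b::linorder set"
  assumes D: "finite D"
    and tri: "\<And>v. v \<in> D \<Longrightarrow> \<exists>c. (\<forall>w. c w \<noteq> 0 \<longrightarrow> w \<in> D \<and> v < w) \<and>
      rl_eq (F v) (\<lambda>t. G v t + (\<Sum>w\<in>D. c w * G w t))"
    and v: "v \<in> D"
  shows "in_span F D (G v)"
  using v
proof (induction "card {w \<in> D. v < w}" arbitrary: v rule: less_induct)
  case less
  obtain c where c: "\<And>w. c w \<noteq> 0 \<Longrightarrow> w \<in> D \<and> v < w"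
    and Fv: "rl_eq (F v) (\<lambda>t. G v t + (\<Sum>w\<in>D. c w * G w t))"
    using tri[OF less.prems] by blast
  have "in_span F D (\<lambda>t. c w * G w t)" if w: "w \<in> D" for w
  proof (cases "c w = 0")
    case False
    then have "v < w" using c by blast
    then have "{u \<in> D. w < u} \<subset> {u \<in> D. v < u}" using w by auto
    then have "card {u \<in> D. w < u} < card {u \<in> D. v < u}" using D by (simp add: psubset_card_mono)
    then show ?thesis using less.hyps w by (blast intro: in_span_smult)
  qed (simp add: in_span_zero)
  then have "in_span F D (\<lambda>t. F v t - (\<Sum>w\<in>D. c w * G w t))"
    using D less.prems by (intro in_span_diff in_span_basis in_span_sum)
  moreover have "rl_eq (G v) (\<lambda>t. F v t - (\<Sum>w\<in>D. c w * G w t))"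
    using rl_eq_diff[OF Fv rl_eq_refl[of "\<lambda>t. \<Sum>w\<in>D. c w * G w t"]] by (simp add: rl_eq_sym)
  ultimately show ?case by (rule in_span_rl_eq[rotated])
qed

section \<open>Triangularity and linear independence\<close>

definition leading_word :: "'a::linorder list \<Rightarrow> ('a list \<Rightarrow> int) \<Rightarrow> bool" where
  "leading_word w f \<longleftrightarrow> f w = 1 \<and> (\<forall>x. f x \<noteq> 0 \<longrightarrow> x = w \<or> (w < x \<and> length x = length w))"

lemma leading_word_length: "leading_word w f \<Longrightarrow> f x \<noteq> 0 \<Longrightarrow> length x = length w"
  by (auto simp: leading_word_def)

lemma leading_word_prod:
  assumes u: "leading_word u f" and v: "leading_word v g"
  shows "leading_word (u @ v) (word_prod f g)"
  unfolding leading_word_def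
proof (intro conjI allI impI)
  have "word_prod f g (u @ v) = f u * g v"
    by (rule word_prod_split) (rule leading_word_length[OF u])
  then show "word_prod f g (u @ v) = 1"
    using u v by (simp add: leading_word_def)
  fix x assume "word_prod f g x \<noteq> 0"
  then obtain a b where x: "x = a @ b" and ab: "f a \<noteq> 0" "g b \<noteq> 0"
    by (rule word_prod_nonzero)
  have a: "a = u \<or> u < a" and b: "b = v \<or> v < b"
    using u v ab by (auto simp: leading_word_def)
  have la: "length a = length u" and lb: "length b = length v"
    using leading_word_length[OF u ab(1)] leading_word_length[OF v ab(2)] .
  have "a @ b = u @ v \<or> u @ v < a @ b"
  proof (cases "a = u")
    case True
    then show ?thesis using b by (auto simp only: less_append_same_left)
  next
    case False
    then show ?thesis using a la by (simp add: less_append_same_length)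
  qed
  moreover have "length x = length (u @ v)" using x la lb by simp
  ultimately show "x = u @ v \<or> (u @ v < x \<and> length x = length (u @ v))" using x by blast
qed

lemma word_prod_swapped_above:
  assumes u: "leading_word u f" and v: "leading_word v g" and uv: "u @ v < v"
    and x: "word_prod g f x \<noteq> 0"
  shows "u @ v < x" "length x = length (u @ v)"
proof -
  obtain b a where ba: "x = b @ a" "g b \<noteq> 0" "f a \<noteq> 0"
    using x by (rule word_prod_nonzero)
  have "b = v \<or> v < b"
    using v ba by (auto simp: leading_word_def)
  then have "u @ v < b" using uv less_trans by blast
  then show "u @ v < x" unfolding ba(1) by (rule less_append_right)
  show "length x = length (u @ v)"
    using ba leading_word_length[OF v ba(2)] leading_word_length[OF u ba(3)] by simp
qed

lemma leading_word_bracket: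
  assumes u: "leading_word u f" and v: "leading_word v g" and uv: "u @ v < v"
  shows "leading_word (u @ v) (word_bracket f g)"
  unfolding leading_word_def
proof (intro conjI allI impI)
  have "word_prod g f (u @ v) = 0"
    using word_prod_swapped_above(1)[OF u v uv, of "u @ v"] by auto
  then show "word_bracket f g (u @ v) = 1"
    using leading_word_prod[OF u v] by (simp add: word_bracket_def leading_word_def)
  fix x assume "word_bracket f g x \<noteq> 0"
  then consider "word_prod f g x \<noteq> 0" | "word_prod g f x \<noteq> 0"
    by (force simp: word_bracket_def)
  then show "x = u @ v \<or> (u @ v < x \<and> length x = length (u @ v))"
    using leading_word_prod[OF u v] word_prod_swapped_above[OF u v uv]
    by cases (auto simp: leading_word_def)
qed

lemma leading_word_lyn_mon:
  assumes "lyndon w" "distinct w"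
  shows "leading_word w (assoc_poly (lyn_mon w))"
proof -
  have "w \<noteq> []" using assms(1) by (simp add: lyndon_def)
  then show ?thesis
    using assms
  proof (induction w rule: std_induct)
    case (letter y)
    then show ?case by (simp add: lyn_mon_letter assoc_poly_gen leading_word_def)
  next
    case (std w)
    note std_fact = std_factorization[OF std.hyps(1)]
    note std_dl = distinct_lyndon_std[OF std.prems std.hyps(1)]
    have "leading_word (std_fst w @ std_snd w)
        (word_bracket (assoc_poly (lyn_mon (std_fst w))) (assoc_poly (lyn_mon (std_snd w))))"
      using std.IH std_dl std_fact(1) by (intro leading_word_bracket) simp_all
    then show ?case
      using std_fact(1) by (simp add: lyn_mon_std[OF std.hyps(1)] assoc_poly_mmul fin_supp_lyn_mon)
  qed
qed

lemma lyn_mon_independent: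
  assumes fin: "finite {w. c w \<noteq> 0}"
    and lyn: "\<forall>w. c w \<noteq> 0 \<longrightarrow> lyndon w \<and> distinct w"
    and zero: "rl_eq (lyn_comb c) (\<lambda>_. 0)"
  shows "c w = 0"
proof (rule ccontr)
  let ?S = "{w. c w \<noteq> 0}"
  assume "c w \<noteq> 0"
  then have "?S \<noteq> {}" by auto
  define w0 where "w0 = Min ?S"
  have w0: "w0 \<in> ?S" "\<And>x. x \<in> ?S \<Longrightarrow> w0 \<le> x"
    unfolding w0_def using fin \<open>?S \<noteq> {}\<close> by (rule Min_in, simp add: fin)
  have coeff: "c x * assoc_poly (lyn_mon x) w0 = (if x = w0 then c x else 0)" if "x \<in> ?S" for x
  proof -
    have "leading_word x (assoc_poly (lyn_mon x))"
      using lyn that by (simp add: leading_word_lyn_mon)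
    then show ?thesis using w0(2)[OF that] by (auto simp: leading_word_def)
  qed
  have "0 = assoc_poly (comb lyn_mon c) w0"
    using rl_eq_assoc_poly[OF zero[unfolded lyn_comb_eq_comb] fin_supp_comb[OF fin fin_supp_lyn_mon]
        fin_supp_zero] lyn w0(1)
    by (simp add: assoc_poly_zero)
  also have "\<dots> = (\<Sum>x\<in>?S. if x = w0 then c x else 0)"
    using coeff by (simp add: assoc_poly_comb[OF fin fin_supp_lyn_mon])
  also have "\<dots> = c w0" using fin w0(1) by simp
  finally show False using w0(1) by simp
qed

section \<open>Left-normed brackets\<close>

text \<open>\<open>lnorm [y\<^sub>1, \<dots>, y\<^sub>k]\<close> is \<open>[[y\<^sub>1, y\<^sub>2], \<dots>, y\<^sub>k]\<close>; its value at \<open>[]\<close> is junk and never used.\<close>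

definition lnorm :: "'a list \<Rightarrow> 'a btree \<Rightarrow> int" where
  "lnorm w = foldl (\<lambda>p y. mmul p (gen y)) (gen (hd w)) (tl w)"

lemma lnorm_single: "lnorm [y] = gen y"
  by (simp add: lnorm_def)

lemma lnorm_snoc: "w \<noteq> [] \<Longrightarrow> lnorm (w @ [c]) = mmul (lnorm w) (gen c)"
  by (cases w) (simp_all add: lnorm_def)

lemma fin_supp_lnorm: "fin_supp (lnorm w)"
proof -
  have "fin_supp (foldl (\<lambda>p y. mmul p (gen y)) p ys)" if "fin_supp p" for p :: "'a btree \<Rightarrow> int" and ys
    using that by (induction ys arbitrary: p) (simp_all add: fin_supp_mmul fin_supp_gen)
  then show ?thesis by (simp add: lnorm_def fin_supp_gen)
qed

lemma in_span_lnorm_mmul_gen: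
  assumes "in_span lnorm S x" "[] \<notin> S"
  shows "in_span lnorm ((\<lambda>w. w @ [c]) ` S) (mmul x (gen c))"
proof (rule in_span_mmul_right[OF assms(1) fin_supp_gen])
  fix w assume w: "w \<in> S"
  then have "mmul (lnorm w) (gen c) = lnorm (w @ [c])"
    using assms(2) by (metis lnorm_snoc)
  then show "in_span lnorm ((\<lambda>w. w @ [c]) ` S) (mmul (lnorm w) (gen c))"
    using w by (simp add: in_span_basis)
qed

lemma in_span_lnorm_append:
  assumes "in_span lnorm S (lnorm p)" "p \<noteq> []" "[] \<notin> S"
  shows "in_span lnorm ((\<lambda>w. w @ b) ` S) (lnorm (p @ b))"
proof (induction b rule: rev_induct)
  case Nil
  then show ?case using assms(1) by simp
next
  case (snoc c b)
  have "[] \<notin> (\<lambda>w. w @ b) ` S" using assms(3) by auto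
  with snoc have "in_span lnorm ((\<lambda>w. w @ [c]) ` (\<lambda>w. w @ b) ` S) (mmul (lnorm (p @ b)) (gen c))"
    by (rule in_span_lnorm_mmul_gen)
  moreover have "lnorm (p @ b @ [c]) = mmul (lnorm (p @ b)) (gen c)"
    using lnorm_snoc[of "p @ b" c] assms(2) by simp
  ultimately show ?case by (simp add: image_image)
qed

lemma mmul_lnorm_in_span:
  assumes "u \<noteq> []" "v \<noteq> []"
  shows "in_span lnorm {u @ v' | v'. mset v' = mset v} (mmul (lnorm u) (lnorm v))"
  using assms
proof (induction v arbitrary: u rule: rev_induct)
  case Nil
  then show ?case by simp
next
  case (snoc c v)
  let ?T = "{u @ v' | v'. mset v' = mset (v @ [c])}"
  show ?case
  proof (cases "v = []")
    case True
    then have "mmul (lnorm u) (lnorm (v @ [c])) = lnorm (u @ [c])"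
      using snoc.prems by (simp add: lnorm_single lnorm_snoc)
    moreover have "u @ [c] \<in> ?T" using True by auto
    ultimately show ?thesis by (simp add: in_span_basis)
  next
    case False
    have jacobi: "rl_eq (mmul (lnorm u) (lnorm (v @ [c])))
        (\<lambda>t. mmul (mmul (lnorm u) (lnorm v)) (gen c) t - mmul (lnorm (u @ [c])) (lnorm v) t)"
      using rl_eq_jacobi[of "lnorm u" "lnorm v" "gen c"] False snoc.prems
      by (simp add: lnorm_snoc fin_supp_lnorm fin_supp_gen)
    have "in_span lnorm ((\<lambda>w. w @ [c]) ` {u @ v' | v'. mset v' = mset v})
        (mmul (mmul (lnorm u) (lnorm v)) (gen c))"
      using snoc.IH[OF snoc.prems(1) False] by (rule in_span_lnorm_mmul_gen) (use snoc.prems in auto)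
    moreover have "in_span lnorm {(u @ [c]) @ v' | v'. mset v' = mset v} (mmul (lnorm (u @ [c])) (lnorm v))"
      using False by (intro snoc.IH) auto
    moreover have "(\<lambda>w. w @ [c]) ` {u @ v' | v'. mset v' = mset v} \<subseteq> ?T"
      by (force intro: exI[of _ "v' @ [c]" for v'])
    moreover have "{(u @ [c]) @ v' | v'. mset v' = mset v} \<subseteq> ?T"
      by (force intro: exI[of _ "c # v'" for v'])
    ultimately show ?thesis using jacobi by (blast intro: in_span_rl_eq in_span_diff in_span_mono)
  qed
qed

lemma in_span_mmul_permutations:
  assumes "in_span lnorm (permutations_of_multiset M) x" "in_span lnorm (permutations_of_multiset N) y"
    and "M \<noteq> {#}" "N \<noteq> {#}" "fin_supp y"
  shows "in_span lnorm (permutations_of_multiset (M + N)) (mmul x y)"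
proof (rule in_span_mmul_right[OF assms(1,5)])
  fix u assume u: "u \<in> permutations_of_multiset M"
  show "in_span lnorm (permutations_of_multiset (M + N)) (mmul (lnorm u) y)"
  proof (rule in_span_mmul_left[OF assms(2) fin_supp_lnorm])
    fix v assume v: "v \<in> permutations_of_multiset N"
    have "u \<noteq> []" "v \<noteq> []" using u v assms(3,4) by (auto simp: permutations_of_multiset_def)
    from mmul_lnorm_in_span[OF this]
    show "in_span lnorm (permutations_of_multiset (M + N)) (mmul (lnorm u) (lnorm v))"
      by (rule in_span_mono) (use u v in \<open>auto simp: permutations_of_multiset_def\<close>)
  qed
qed

definition tree_basis :: "'a btree \<Rightarrow> 'a btree \<Rightarrow> int" where
  "tree_basis t = (\<lambda>s. if s = t then 1 else 0)"

fun leaves :: "'a btree \<Rightarrow> 'a list" where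
  "leaves (Leaf y) = [y]"
| "leaves (Br s t) = leaves s @ leaves t"

lemma leaves_nonempty: "leaves t \<noteq> []"
  by (induction t) auto

lemma length_leaves: "length (leaves t) = nleaves t"
  by (induction t) auto

lemma tree_basis_Leaf: "tree_basis (Leaf y) = gen y"
  by (simp add: tree_basis_def gen_def fun_eq_iff)

lemma tree_basis_Br: "tree_basis (Br s t) = mmul (tree_basis s) (tree_basis t)"
  by (simp add: tree_basis_def mmul_def fun_eq_iff split: btree.split)

lemma fin_supp_tree_basis: "fin_supp (tree_basis t)"
  by (simp add: fin_supp_def tree_basis_def)

lemma homog_tree_basis: "homog (nleaves t) (tree_basis t)"
  unfolding homog_def by (simp add: fin_supp_tree_basis) (simp add: tree_basis_def)

lemma tree_basis_expansion: "fin_supp x \<Longrightarrow> x = (\<lambda>s. \<Sum>t\<in>supp x. x t * tree_basis t s)"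
  by (rule ext) (simp add: tree_basis_def supp_def fin_supp_def if_distrib cong: if_cong)

lemma lyn_mon_tree_basis: "w \<noteq> [] \<Longrightarrow> \<exists>t. lyn_mon w = tree_basis t \<and> leaves t = w"
proof (induction w rule: std_induct)
  case (letter y)
  show ?case by (rule exI[of _ "Leaf y"]) (simp add: lyn_mon_letter tree_basis_Leaf)
next
  case (std w)
  then obtain s t where "lyn_mon (std_fst w) = tree_basis s" "leaves s = std_fst w"
    "lyn_mon (std_snd w) = tree_basis t" "leaves t = std_snd w" by blast
  then show ?case using std_factorization(1)[OF std.hyps(1)]
    by (intro exI[of _ "Br s t"]) (simp add: lyn_mon_std[OF std.hyps(1)] tree_basis_Br)
qed

lemma tree_basis_in_span_lnorm:
  "in_span lnorm (permutations_of_multiset (mset (leaves t))) (tree_basis t)"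
proof (induction t)
  case (Leaf y)
  have "tree_basis (Leaf y) = lnorm [y]" by (simp add: tree_basis_Leaf lnorm_single)
  then show ?case by (simp add: in_span_basis permutations_of_multiset_def)
next
  case (Br s t)
  then show ?case
    unfolding tree_basis_Br leaves.simps mset_append
    by (intro in_span_mmul_permutations) (simp_all add: leaves_nonempty fin_supp_tree_basis)
qed

lemma lyn_mon_in_span_lnorm:
  "w \<noteq> [] \<Longrightarrow> in_span lnorm (permutations_of_multiset (mset w)) (lyn_mon w)"
  using lyn_mon_tree_basis tree_basis_in_span_lnorm by metis

lemma rnorm_Cons: "ys \<noteq> [] \<Longrightarrow> rnorm (y # ys) = mmul (gen y) (rnorm ys)"
  by (cases ys) simp_all

lemma lnorm_rnorm:
  "w \<noteq> [] \<Longrightarrow> rl_eq (lnorm w) (\<lambda>t. (-1) ^ (length w - 1) * rnorm (rev w) t)"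
proof (induction w rule: rev_induct)
  case Nil
  then show ?case by simp
next
  case (snoc c w)
  show ?case
  proof (cases "w = []")
    case True
    then show ?thesis by (simp add: lnorm_single rl_eq_refl)
  next
    case False
    let ?s = "(-1::int) ^ (length w - 1)"
    have "rl_eq (lnorm (w @ [c])) (\<lambda>t. - mmul (gen c) (lnorm w) t)"
      unfolding lnorm_snoc[OF False] by (rule rl_eq_anticomm) (simp_all add: fin_supp_lnorm fin_supp_gen)
    moreover have "rl_eq (mmul (gen c) (lnorm w)) (mmul (gen c) (\<lambda>t. ?s * rnorm (rev w) t))"
      by (rule rl_eq_mmul_left[OF fin_supp_gen snoc.IH[OF False]])
    then have "rl_eq (mmul (gen c) (lnorm w)) (\<lambda>t. ?s * rnorm (c # rev w) t)"
      using False by (simp add: mmul_smult_right rnorm_Cons)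
    then have "rl_eq (\<lambda>t. - mmul (gen c) (lnorm w) t) (\<lambda>t. - (?s * rnorm (c # rev w) t))"
      using rl_eq_smult[of _ _ "-1"] by simp
    ultimately have "rl_eq (lnorm (w @ [c])) (\<lambda>t. - (?s * rnorm (c # rev w) t))"
      by (rule rl_eq_trans)
    moreover have "(-1) ^ (length (w @ [c]) - 1) = - ?s"
      using False by (cases "length w") auto
    ultimately show ?thesis by simp
  qed
qed

lemma lnorm_not_distinct: "\<not> distinct w \<Longrightarrow> rl_eq (lnorm w) (\<lambda>_. 0)"
proof -
  assume w: "\<not> distinct w"
  then have "2 \<le> length w" by (cases w; cases "tl w") auto
  then have "(\<lambda>t. (-1) ^ (length w - 1) * rnorm (rev w) t) \<in> rl_ideal"
    using w by (intro rl_ideal_smult rl_ideal.rep) auto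
  then have "rl_eq (\<lambda>t. (-1) ^ (length w - 1) * rnorm (rev w) t) (\<lambda>_. 0)"
    by (simp add: rl_eq_def)
  moreover have "w \<noteq> []" using w by auto
  ultimately show ?thesis using lnorm_rnorm[of w] rl_eq_trans by blast
qed

lemma lnorm_in_span_hd:
  assumes "m \<in> set w"
  shows "in_span lnorm {w'. mset w' = mset w \<and> hd w' = m} (lnorm w)"
proof -
  obtain a b where w: "w = a @ m # b" using assms by (meson split_list)
  show ?thesis
  proof (cases "a = []")
    case True
    then show ?thesis using w by (simp add: in_span_basis)
  next
    case False
    let ?S = "{[m] @ v' | v'. mset v' = mset a}"
    have "rl_eq (lnorm (a @ [m])) (\<lambda>t. - mmul (gen m) (lnorm a) t)"
      unfolding lnorm_snoc[OF False] by (rule rl_eq_anticomm) (simp_all add: fin_supp_lnorm fin_supp_gen)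
    moreover have "in_span lnorm ?S (mmul (lnorm [m]) (lnorm a))"
      using False by (intro mmul_lnorm_in_span) auto
    ultimately have "in_span lnorm ?S (lnorm (a @ [m]))"
      using in_span_smult[of lnorm ?S _ "-1"] by (simp add: lnorm_single in_span_rl_eq)
    then have "in_span lnorm ((\<lambda>v. v @ b) ` ?S) (lnorm ((a @ [m]) @ b))"
      by (rule in_span_lnorm_append) auto
    moreover have "(\<lambda>v. v @ b) ` ?S \<subseteq> {w'. mset w' = mset w \<and> hd w' = m}" using w by auto
    ultimately show ?thesis using w by (simp add: in_span_mono)
  qed
qed

lemma assoc_poly_lnorm_snoc:
  assumes "w \<noteq> []"
  shows "assoc_poly (lnorm (w @ [c])) x =
    (if x \<noteq> [] \<and> last x = c then assoc_poly (lnorm w) (butlast x) else 0)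
    - (if x \<noteq> [] \<and> hd x = c then assoc_poly (lnorm w) (tl x) else 0)"
  by (simp add: lnorm_snoc[OF assms] assoc_poly_mmul fin_supp_lnorm fin_supp_gen assoc_poly_gen
      word_bracket_def word_prod_letter_left word_prod_letter_right)

lemma assoc_poly_lnorm:
  assumes "distinct w" "w \<noteq> []" "hd x = hd w"
  shows "assoc_poly (lnorm w) x = (if x = w then 1 else 0)"
  using assms
proof (induction w arbitrary: x rule: rev_induct)
  case Nil
  then show ?case by simp
next
  case (snoc c w)
  show ?case
  proof (cases "w = []")
    case True
    then show ?thesis by (simp add: lnorm_single assoc_poly_gen)
  next
    case False
    let ?A = "assoc_poly (lnorm w)"
    have hd: "hd x = hd w" using snoc.prems False by simp
    have "hd w \<noteq> c" using snoc.prems(1) False by (metis distinct_append hd_in_set disjoint_iff list.set_intros(1))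
    then have "assoc_poly (lnorm (w @ [c])) x = (if x \<noteq> [] \<and> last x = c then ?A (butlast x) else 0)"
      using hd by (simp add: assoc_poly_lnorm_snoc[OF False])
    also have "\<dots> = (if x = w @ [c] then 1 else 0)"
    proof (cases "x \<noteq> [] \<and> last x = c")
      case True
      then have x: "x = butlast x @ [c]" using append_butlast_last_id[of x] by simp
      show ?thesis
      proof (cases "butlast x = []")
        case True
        then show ?thesis using x False by (simp add: assoc_poly_Nil)
      next
        case nonempty: False
        then have "hd (butlast x) = hd w" using hd x by (metis hd_append2)
        then have "?A (butlast x) = (if butlast x = w then 1 else 0)"
          using snoc.IH snoc.prems(1) False by simp
        then show ?thesis using True x by auto
      qed
    qed auto
    finally show ?thesis .
  qed
qed

section \<open>Spanning\<close>

definition distinct_lyndon_words :: "'a::linorder multiset \<Rightarrow> 'a list set" where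
  "distinct_lyndon_words M = {w. lyndon w \<and> distinct w \<and> mset w = M}"

lemma finite_distinct_lyndon_words: "finite (distinct_lyndon_words M)"
  by (rule finite_subset[OF _ finite_permutations_of_multiset[of M]])
    (auto simp: distinct_lyndon_words_def permutations_of_multiset_def)

lemma distinct_lyndon_words_eq:
  assumes "distinct z" "z \<noteq> []"
  shows "distinct_lyndon_words (mset z) = {w. mset w = mset z \<and> hd w = Min (set z)}"
proof -
  have "lyndon w \<and> distinct w \<longleftrightarrow> hd w = Min (set z)" if w: "mset w = mset z" for w
  proof -
    have d: "distinct w" using w assms(1) mset_eq_imp_distinct_iff by blast
    have ne: "w \<noteq> []" using w assms(2) by (cases w) auto
    have set: "set w = set z" using w by (rule mset_eq_setD)
    have "hd w \<in> set z" using ne set hd_in_set by blast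
    then have "(\<forall>x\<in>set z. hd w \<le> x) \<longleftrightarrow> hd w = Min (set z)"
      by (metis List.finite_set Min_eqI Min_le)
    moreover have "lyndon w \<longleftrightarrow> (\<forall>x\<in>set z. hd w \<le> x)"
      using distinct_lyndon_iff[OF d] ne set by simp
    ultimately show ?thesis using d by simp
  qed
  then have "lyndon w \<and> distinct w \<and> mset w = mset z \<longleftrightarrow> mset w = mset z \<and> hd w = Min (set z)" for w
    by (cases "mset w = mset z") simp_all
  then show ?thesis by (simp add: distinct_lyndon_words_def)
qed

lemma distinct_lyndon_wordsD:
  "u \<in> distinct_lyndon_words M \<Longrightarrow> lyndon u \<and> distinct u \<and> u \<noteq> [] \<and> M = mset u"
  by (auto simp: distinct_lyndon_words_def lyndon_def)

lemma lyn_mon_in_span_lnorm_distinct_lyndon: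
  assumes "u \<in> distinct_lyndon_words M"
  shows "in_span lnorm (distinct_lyndon_words M) (lyn_mon u)"
proof (rule in_span_trans)
  note u = distinct_lyndon_wordsD[OF assms]
  show "in_span lnorm (permutations_of_multiset M) (lyn_mon u)"
    using lyn_mon_in_span_lnorm[of u] u by simp
  fix w assume "w \<in> permutations_of_multiset M"
  then have "mset w = mset u" "Min (set u) \<in> set w"
    using u by (auto simp: permutations_of_multiset_def dest: mset_eq_setD)
  then show "in_span lnorm (distinct_lyndon_words M) (lnorm w)"
    using lnorm_in_span_hd[of "Min (set u)" w] distinct_lyndon_words_eq[of u] u by simp
qed

lemma lnorm_coefficients:
  assumes y: "rl_eq y (comb lnorm c)" "fin_supp y"
    and c: "finite {w. c w \<noteq> 0}" "{w. c w \<noteq> 0} \<subseteq> distinct_lyndon_words M"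
    and x: "x \<in> distinct_lyndon_words M"
  shows "c x = assoc_poly y x"
proof -
  note x' = distinct_lyndon_wordsD[OF x]
  have "hd w = hd x" "distinct w" "w \<noteq> []" if "w \<in> distinct_lyndon_words M" for w
    using that x x' distinct_lyndon_words_eq[of x] by (auto dest: distinct_lyndon_wordsD)
  then have "assoc_poly (lnorm w) x = (if x = w then 1 else 0)" if "c w \<noteq> 0" for w
    using that c(2) by (intro assoc_poly_lnorm) auto
  then have "(\<Sum>w | c w \<noteq> 0. c w * assoc_poly (lnorm w) x) = (\<Sum>w | c w \<noteq> 0. if w = x then c w else 0)"
    by (intro sum.cong) auto
  then have "assoc_poly (comb lnorm c) x = c x"
    using c(1) by (simp add: assoc_poly_comb fin_supp_lnorm)
  then show ?thesis
    using rl_eq_assoc_poly[OF y fin_supp_comb[OF c(1) fin_supp_lnorm]] x' by simp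
qed

lemma lyn_mon_lnorm_unitriangular:
  assumes u: "u \<in> distinct_lyndon_words M"
  defines "D \<equiv> distinct_lyndon_words M"
  shows "\<exists>c. (\<forall>w. c w \<noteq> 0 \<longrightarrow> w \<in> D \<and> u < w) \<and>
    rl_eq (lyn_mon u) (\<lambda>t. lnorm u t + (\<Sum>w\<in>D. c w * lnorm w t))"
proof -
  note u' = distinct_lyndon_wordsD[OF u]
  obtain c where c: "finite {w. c w \<noteq> 0}" "{w. c w \<noteq> 0} \<subseteq> D" "rl_eq (lyn_mon u) (comb lnorm c)"
    using lyn_mon_in_span_lnorm_distinct_lyndon[OF u] unfolding in_span_def D_def by blast
  have D: "finite D" "u \<in> D" using u by (simp_all add: D_def finite_distinct_lyndon_words)
  have coeff: "c x = assoc_poly (lyn_mon u) x" if "x \<in> D" for x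
    using c(3) fin_supp_lyn_mon c(1,2) that unfolding D_def by (rule lnorm_coefficients)
  have lead: "leading_word u (assoc_poly (lyn_mon u))"
    using u' by (intro leading_word_lyn_mon) simp_all
  define c' where "c' = c(u := 0)"
  have "c' w \<noteq> 0 \<longrightarrow> w \<in> D \<and> u < w" for w
  proof
    assume "c' w \<noteq> 0"
    then have w: "w \<noteq> u" "c w \<noteq> 0" by (auto simp: c'_def split: if_splits)
    then have "w \<in> D" using c(2) by auto
    then have "assoc_poly (lyn_mon u) w \<noteq> 0" using coeff w by simp
    then show "w \<in> D \<and> u < w" using lead w \<open>w \<in> D\<close> by (auto simp: leading_word_def)
  qed
  moreover have "comb lnorm c = (\<lambda>t. lnorm u t + (\<Sum>w\<in>D. c' w * lnorm w t))"
  proof (rule ext)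
    fix t
    have "comb lnorm c t = c u * lnorm u t + (\<Sum>w\<in>D - {u}. c w * lnorm w t)"
      using comb_superset[OF D(1) c(2), of lnorm t] sum.remove[OF D, of "\<lambda>w. c w * lnorm w t"]
      by simp
    also have "\<dots> = lnorm u t + (\<Sum>w\<in>D. c' w * lnorm w t)"
      using coeff[OF D(2)] lead sum.remove[OF D, of "\<lambda>w. c' w * lnorm w t"]
      by (simp add: leading_word_def c'_def)
    finally show "comb lnorm c t = lnorm u t + (\<Sum>w\<in>D. c' w * lnorm w t)" .
  qed
  ultimately show ?thesis using c(3) by (intro exI[of _ c']) simp
qed

lemma lnorm_in_span_lyn_mon:
  assumes "distinct w" "w \<noteq> []"
  shows "in_span lyn_mon (distinct_lyndon_words (mset w)) (lnorm w)"
proof (rule in_span_trans)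
  let ?D = "distinct_lyndon_words (mset w)"
  show "in_span lnorm ?D (lnorm w)"
    using lnorm_in_span_hd[of "Min (set w)" w] assms distinct_lyndon_words_eq[OF assms] by simp
  show "in_span lyn_mon ?D (lnorm v)" if "v \<in> ?D" for v
    using finite_distinct_lyndon_words lyn_mon_lnorm_unitriangular that
    by (rule in_span_unitriangular)
qed

lemma tree_basis_in_span_lyn_mon:
  "in_span lyn_mon {w. lyndon w \<and> distinct w \<and> length w = nleaves t} (tree_basis t)"
proof (rule in_span_trans[OF tree_basis_in_span_lnorm])
  fix w assume "w \<in> permutations_of_multiset (mset (leaves t))"
  then have w: "mset w = mset (leaves t)" by (simp add: permutations_of_multiset_def)
  then have len: "length w = nleaves t" by (metis length_leaves size_mset)
  show "in_span lyn_mon {w. lyndon w \<and> distinct w \<and> length w = nleaves t} (lnorm w)"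
  proof (cases "distinct w")
    case True
    have "w \<noteq> []" using w leaves_nonempty[of t] by auto
    with True have "in_span lyn_mon (distinct_lyndon_words (mset w)) (lnorm w)"
      by (rule lnorm_in_span_lyn_mon)
    moreover have "distinct_lyndon_words (mset w) \<subseteq> {w. lyndon w \<and> distinct w \<and> length w = nleaves t}"
      using len by (auto simp: distinct_lyndon_words_def dest: arg_cong[of _ _ size])
    ultimately show ?thesis by (rule in_span_mono)
  next
    case False
    then show ?thesis using lnorm_not_distinct in_span_zero in_span_rl_eq by blast
  qed
qed

lemma in_span_lyn_mon:
  assumes "fin_supp x"
  shows "in_span lyn_mon {w. lyndon w \<and> distinct w \<and> length w \<in> nleaves ` supp x} x"
proof -
  let ?L = "{w. lyndon w \<and> distinct w \<and> length w \<in> nleaves ` supp x}"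
  have "in_span lyn_mon ?L (tree_basis t)" if "t \<in> supp x" for t
    using tree_basis_in_span_lyn_mon[of t] by (rule in_span_mono) (use that in auto)
  then have "in_span lyn_mon ?L (\<lambda>s. \<Sum>t\<in>supp x. x t * tree_basis t s)"
    using assms by (intro in_span_sum in_span_smult) (simp_all add: fin_supp_iff_finite_supp)
  then show ?thesis using tree_basis_expansion[OF assms] by simp
qed

lemma lyn_mon_spanning:
  assumes "fin_supp x"
  shows "\<exists>c. finite {w. c w \<noteq> 0} \<and> (\<forall>w. c w \<noteq> 0 \<longrightarrow> lyndon w \<and> distinct w) \<and> rl_eq x (lyn_comb c)"
proof -
  obtain c where "finite {w. c w \<noteq> 0}" "{w. c w \<noteq> 0} \<subseteq> {w. lyndon w \<and> distinct w \<and> length w \<in> nleaves ` supp x}"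
    "rl_eq x (comb lyn_mon c)"
    using in_span_lyn_mon[OF assms] unfolding in_span_def by blast
  then show ?thesis unfolding lyn_comb_eq_comb by blast
qed

section \<open>The homogeneous components\<close>

lemma homog_lyn_mon: "w \<noteq> [] \<Longrightarrow> homog (length w) (lyn_mon w)"
  using lyn_mon_tree_basis homog_tree_basis length_leaves by metis

lemma distinct_lyndon_with_set:
  assumes "finite S" "S \<noteq> {}"
  shows "{w. lyndon w \<and> distinct w \<and> set w = S} = (\<lambda>xs. Min S # xs) ` permutations_of_set (S - {Min S})"
proof (intro equalityI subsetI)
  fix w assume "w \<in> {w. lyndon w \<and> distinct w \<and> set w = S}"
  then have w: "lyndon w" "distinct w" "set w = S" by auto
  then obtain y ys where y: "w = y # ys" by (cases w) (auto simp: lyndon_def)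
  have "y \<le> x" if "x \<in> S" for x using lyndon_hd_le[OF w(1), of x] that w(3) y by auto
  then have "y = Min S" using assms(1) w(3) y by (intro Min_eqI[symmetric]) auto
  moreover have "ys \<in> permutations_of_set (S - {Min S})"
    using w y \<open>y = Min S\<close> by (auto simp: permutations_of_set_def)
  ultimately show "w \<in> (\<lambda>xs. Min S # xs) ` permutations_of_set (S - {Min S})" using y by blast
next
  fix w assume "w \<in> (\<lambda>xs. Min S # xs) ` permutations_of_set (S - {Min S})"
  then obtain ys where w: "w = Min S # ys" "distinct ys" "set ys = S - {Min S}"
    by (auto simp: permutations_of_set_def)
  have "Min S \<in> S" using assms by simp
  then have "distinct w" "set w = S" using w by auto
  moreover have "lyndon w" using w assms \<open>distinct w\<close> by (simp add: distinct_lyndon_iff)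
  ultimately show "w \<in> {w. lyndon w \<and> distinct w \<and> set w = S}" by simp
qed

lemma card_distinct_lyndon_with_set:
  assumes "finite S" "S \<noteq> {}"
  shows "card {w. lyndon w \<and> distinct w \<and> set w = S} = fact (card S - 1)"
  using assms by (simp add: distinct_lyndon_with_set card_image card_Diff_singleton)

lemma card_distinct_lyndon_length:
  assumes "finite (UNIV :: 'a set)" "1 \<le> k"
  shows "card {w :: 'a::linorder list. lyndon w \<and> distinct w \<and> length w = k}
    = fact (k - 1) * (card (UNIV :: 'a set) choose k)"
proof -
  let ?A = "\<lambda>S. {w :: 'a list. lyndon w \<and> distinct w \<and> set w = S}"
  let ?I = "{S :: 'a set. card S = k}"
  have fin: "finite S" for S :: "'a set" using assms(1) by (rule finite_subset[rotated]) simp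
  have ne: "S \<noteq> {}" if "S \<in> ?I" for S using that assms(2) by auto
  have "{w :: 'a list. lyndon w \<and> distinct w \<and> length w = k} = (\<Union>S\<in>?I. ?A S)"
    by (auto simp: distinct_card[symmetric])
  moreover have "card (\<Union>S\<in>?I. ?A S) = (\<Sum>S\<in>?I. card (?A S))"
  proof (rule card_UN_disjoint)
    show "finite ?I" by (rule finite_subset[OF subset_UNIV]) (simp add: Finite_Set.finite_set assms(1))
    show "\<forall>S\<in>?I. finite (?A S)" using fin ne by (simp add: distinct_lyndon_with_set)
  qed auto
  ultimately have "card {w :: 'a list. lyndon w \<and> distinct w \<and> length w = k} = (\<Sum>S\<in>?I. card (?A S))"
    by simp
  also have "\<dots> = (\<Sum>S\<in>?I. fact (k - 1))"
    by (intro sum.cong) (simp_all add: card_distinct_lyndon_with_set fin ne)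
  also have "\<dots> = fact (k - 1) * (card (UNIV :: 'a set) choose k)"
    using n_subsets[OF assms(1), of k] by simp
  finally show ?thesis .
qed

lemma lyn_comb_enumeration:
  fixes r :: nat
  assumes e: "bij_betw e {..<r} L"
  shows "lyn_comb (\<lambda>w. if w \<in> L then c (the_inv_into {..<r} e w) else 0)
    = (\<lambda>t. \<Sum>i<r. c i * lyn_mon (e i) t)"
proof (rule ext)
  fix t
  let ?d = "\<lambda>w. if w \<in> L then c (the_inv_into {..<r} e w) else 0"
  have L: "finite L" using bij_betw_finite[OF e] by simp
  have "lyn_comb ?d t = (\<Sum>w\<in>L. ?d w * lyn_mon w t)"
    unfolding lyn_comb_eq_comb by (rule comb_superset[OF L]) auto
  also have "\<dots> = (\<Sum>i<r. ?d (e i) * lyn_mon (e i) t)"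
    by (rule sum.reindex_bij_betw[OF e, symmetric])
  also have "\<dots> = (\<Sum>i<r. c i * lyn_mon (e i) t)"
    using e by (intro sum.cong) (auto simp: bij_betw_def the_inv_into_f_f)
  finally show "lyn_comb ?d t = (\<Sum>i<r. c i * lyn_mon (e i) t)" .
qed

lemma enumerated_lyn_mon_independent:
  fixes r :: nat
  assumes e: "bij_betw e {..<r} L" and L: "\<forall>w\<in>L. lyndon w \<and> distinct w"
    and zero: "rl_eq (\<lambda>t. \<Sum>i<r. c i * lyn_mon (e i) t) (\<lambda>_. 0)" and i: "i < r"
  shows "c i = 0"
proof -
  let ?d = "\<lambda>w. if w \<in> L then c (the_inv_into {..<r} e w) else 0"
  have "finite L" using bij_betw_finite[OF e] by simp
  then have "finite {w. ?d w \<noteq> 0}" by (rule finite_subset[rotated]) auto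
  moreover have "\<forall>w. ?d w \<noteq> 0 \<longrightarrow> lyndon w \<and> distinct w" using L by auto
  moreover have "rl_eq (lyn_comb ?d) (\<lambda>_. 0)" using zero by (simp add: lyn_comb_enumeration[OF e])
  ultimately have "?d (e i) = 0" by (rule lyn_mon_independent)
  then show ?thesis
    using e i by (simp add: bij_betw_def the_inv_into_f_f bij_betwE[OF e] split: if_splits)
qed

lemma enumerated_lyn_mon_spanning:
  fixes r :: nat
  assumes e: "bij_betw e {..<r} L" and x: "in_span lyn_mon L x"
  shows "\<exists>c. rl_eq x (\<lambda>t. \<Sum>i<r. c i * lyn_mon (e i) t)"
proof -
  obtain d where d: "{w. d w \<noteq> 0} \<subseteq> L" "rl_eq x (lyn_comb d)"
    using x unfolding in_span_def lyn_comb_eq_comb by blast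
  have "d = (\<lambda>w. if w \<in> L then d (e (the_inv_into {..<r} e w)) else 0)"
    using d(1) f_the_inv_into_f_bij_betw[OF e] by (auto simp: fun_eq_iff)
  then have "lyn_comb d = (\<lambda>t. \<Sum>i<r. d (e i) * lyn_mon (e i) t)"
    using lyn_comb_enumeration[OF e, of "\<lambda>i. d (e i)"] by simp
  then show ?thesis using d(2) by auto
qed

lemma lyn_mon_homog_basis:
  assumes "finite (UNIV :: 'a set)" "1 \<le> k"
  shows "\<exists>b :: nat \<Rightarrow> ('a::linorder btree \<Rightarrow> int).
           let r = fact (k - 1) * (card (UNIV :: 'a set) choose k) in
           (\<forall>i<r. homog k (b i))
           \<and> (\<forall>c :: nat \<Rightarrow> int. rl_eq (\<lambda>t. \<Sum>i<r. c i * b i t) (\<lambda>_. 0) \<longrightarrow> (\<forall>i<r. c i = 0))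
           \<and> (\<forall>x. homog k x \<longrightarrow> (\<exists>c :: nat \<Rightarrow> int. rl_eq x (\<lambda>t. \<Sum>i<r. c i * b i t)))"
proof -
  let ?L = "{w :: 'a list. lyndon w \<and> distinct w \<and> length w = k}"
  let ?r = "fact (k - 1) * (card (UNIV :: 'a set) choose k)"
  have "finite ?L"
    using finite_lists_length_eq[OF assms(1), of k] by (rule finite_subset[rotated]) auto
  then obtain e where "bij_betw e {0..<card ?L} ?L"
    using ex_bij_betw_nat_finite by blast
  then have e: "bij_betw e {..<?r} ?L"
    using card_distinct_lyndon_length[OF assms] by (simp add: atLeast0LessThan)
  show ?thesis unfolding Let_def
  proof (intro exI[of _ "\<lambda>i. lyn_mon (e i)"] conjI allI impI)
    fix i assume "i < ?r"
    then have "e i \<in> ?L" using bij_betwE[OF e] by blast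
    then show "homog k (lyn_mon (e i))" using homog_lyn_mon[of "e i"] by (auto simp: lyndon_def)
  next
    fix c :: "nat \<Rightarrow> int" and i
    assume "rl_eq (\<lambda>t. \<Sum>i<?r. c i * lyn_mon (e i) t) (\<lambda>_. 0)" "i < ?r"
    then show "c i = 0" by (intro enumerated_lyn_mon_independent[OF e]) auto
  next
    fix x :: "'a btree \<Rightarrow> int"
    assume "homog k x"
    then have "in_span lyn_mon ?L x"
      using in_span_lyn_mon[of x] by (auto simp: homog_def supp_def elim!: in_span_mono)
    then show "\<exists>c. rl_eq x (\<lambda>t. \<Sum>i<?r. c i * lyn_mon (e i) t)"
      by (rule enumerated_lyn_mon_spanning[OF e])
  qed
qed

theorem proposition2p9:
  fixes Y :: "'a::linorder itself"
  shows
   "(\<forall>c :: 'a list \<Rightarrow> int.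
        finite {w. c w \<noteq> 0} \<and> (\<forall>w. c w \<noteq> 0 \<longrightarrow> lyndon w \<and> distinct w) \<and>
        rl_eq (lyn_comb c) (\<lambda>_. 0) \<longrightarrow> (\<forall>w. c w = 0))
    \<and> (\<forall>x :: 'a btree \<Rightarrow> int. fin_supp x \<longrightarrow>
        (\<exists>c :: 'a list \<Rightarrow> int. finite {w. c w \<noteq> 0} \<and>
           (\<forall>w. c w \<noteq> 0 \<longrightarrow> lyndon w \<and> distinct w) \<and> rl_eq x (lyn_comb c)))
    \<and> (finite (UNIV :: 'a set) \<longrightarrow>
        (\<forall>k \<ge> 1. \<exists>b :: nat \<Rightarrow> ('a btree \<Rightarrow> int).
           let r = fact (k - 1) * (card (UNIV :: 'a set) choose k) in
           (\<forall>i<r. homog k (b i))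
           \<and> (\<forall>c :: nat \<Rightarrow> int. rl_eq (\<lambda>t. \<Sum>i<r. c i * b i t) (\<lambda>_. 0) \<longrightarrow> (\<forall>i<r. c i = 0))
           \<and> (\<forall>x. homog k x \<longrightarrow> (\<exists>c :: nat \<Rightarrow> int. rl_eq x (\<lambda>t. \<Sum>i<r. c i * b i t)))))"
  by (intro conjI allI impI lyn_mon_spanning lyn_mon_homog_basis) (auto intro: lyn_mon_independent)

end
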